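(* Let $X\in RV_+^p(\alpha)$ with $n\Pr(b_n^{-1}X\in\cdot)\stackrel{v}{\to}\nu_X(\cdot)$, and suppose $n\Pr\{X_i\le\exp(-kb_n)\}\to0$ for every $k>0$ and $i=1,\ldots,p$. Then $t^{-1}(X)\in RV^p(\alpha)$ and $$n\Pr\{b_n^{-1}t^{-1}(X)\in\cdot\}\stackrel{v}{\to}\nu_{t^{-1}(X)}(\cdot)=\nu_X(\cdot\cap[0,\infty]^p),$$ vague convergence in the nonnegative Radon measures on $[-\infty,\infty]^p\setminus\{0\}$.
   Context: $t(y)=\log\{1+\exp(y)\}$, $t^{-1}(x)=\log\{\exp(x)-1\}$, applied componentwise, extended by $t(-\infty)=0$, $t^{-1}(0)=-\infty$, $t(\infty)=t^{-1}(\infty)=\infty$. $X\in RV_+^p(\alpha)$: $X$ takes values in $[0,\infty)^p$ and $n\Pr(b_n^{-1}X\in\cdot)\stackrel{v}{\to}\nu_X$ vaguely on $[0,\infty]^p\setminus\{0\}$ for some $b_n\to\infty$ and nonzero $\nu_X$ (tail index $\alpha>0$). $Y\in RV^p(\alpha)$: $Y$ takes values in $\mathbb{R}^p$ and $n\Pr(b_n^{-1}Y\in\cdot)\stackrel{v}{\to}\nu_Y$ vaguely on $[-\infty,\infty]^p\setminus\{0\}$ for some $b_n\to\infty$ and nonzero $\nu_Y$ with index $\alpha$. *)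

theory Defs
  imports "HOL-Analysis.Analysis" "HOL-Probability.Probability"
begin

text \<open>Extended-real vectors: the compactified space [-\<infinity>,\<infinity>]^p is ereal^'p.
  The cone [0,\<infinity>]^p:\<close>
definition Splus :: "(ereal ^ 'n) set" where
  "Splus = {x. \<forall>i. 0 \<le> x $ i}"

text \<open>t(y) = log(1+exp y) and its inverse t^{-1}(x) = log(exp x - 1), with the
  stated conventions t(-\<infinity>)=0, t^{-1}(0)=-\<infinity>, t(\<infinity>)=t^{-1}(\<infinity>)=\<infinity>.
  (t^{-1} is only meaningful on [0,\<infinity>]; its value at negative arguments is immaterial.)\<close>
fun t_fun :: "ereal \<Rightarrow> ereal" where
  "t_fun (ereal y) = ereal (ln (1 + exp y))"
| "t_fun PInfty = PInfty"
| "t_fun MInfty = 0"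

fun t_inv :: "ereal \<Rightarrow> ereal" where
  "t_inv (ereal x) = (if x \<le> 0 then MInfty else ereal (ln (exp x - 1)))"
| "t_inv PInfty = PInfty"
| "t_inv MInfty = MInfty"

definition scaled_law ::
  "'a measure \<Rightarrow> ('a \<Rightarrow> ereal ^ 'n) \<Rightarrow> (nat \<Rightarrow> real) \<Rightarrow> nat \<Rightarrow> (ereal ^ 'n) measure" where
  "scaled_law M Y b n =
     scale_measure (of_nat n) (distr M borel (\<lambda>\<omega>. \<chi> i. ereal (inverse (b n)) * Y \<omega> $ i))"

definition vague_conv ::
  "(ereal ^ 'n) set \<Rightarrow> (nat \<Rightarrow> (ereal ^ 'n) measure) \<Rightarrow> (ereal ^ 'n) measure \<Rightarrow> bool" where
  "vague_conv S \<mu> \<nu> \<longleftrightarrow>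
     (\<forall>f :: ereal ^ 'n \<Rightarrow> real.
        continuous_on S f \<and> (\<forall>x\<in>S. 0 \<le> f x) \<and>
        (\<exists>K. compact K \<and> K \<subseteq> S - {0} \<and> (\<forall>x\<in>S - K. f x = 0)) \<longrightarrow>
        ((\<lambda>n. \<integral>\<^sup>+x\<in>S - {0}. ennreal (f x) \<partial>\<mu> n) \<longlonglongrightarrow> (\<integral>\<^sup>+x\<in>S - {0}. ennreal (f x) \<partial>\<nu>)))"

definition radon_on :: "(ereal ^ 'n) set \<Rightarrow> (ereal ^ 'n) measure \<Rightarrow> bool" where
  "radon_on S \<nu> \<longleftrightarrow> sets \<nu> = sets borel \<and>
     (\<forall>K. compact K \<and> K \<subseteq> S - {0} \<longrightarrow> emeasure \<nu> K < \<infinity>)"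

definition homogeneous_on :: "(ereal ^ 'n) set \<Rightarrow> real \<Rightarrow> (ereal ^ 'n) measure \<Rightarrow> bool" where
  "homogeneous_on S \<alpha> \<nu> \<longleftrightarrow>
     (\<forall>c::real. c > 0 \<longrightarrow> (\<forall>A \<in> sets borel. A \<subseteq> S - {0} \<longrightarrow>
        emeasure \<nu> ((\<lambda>x. \<chi> i. ereal c * x $ i) ` A) = ennreal (c powr (-\<alpha>)) * emeasure \<nu> A))"

definition regvar_on ::
  "(ereal ^ 'n) set \<Rightarrow> 'a measure \<Rightarrow> ('a \<Rightarrow> ereal ^ 'n) \<Rightarrow> real \<Rightarrow> (nat \<Rightarrow> real)
     \<Rightarrow> (ereal ^ 'n) measure \<Rightarrow> bool" where
  "regvar_on S M Y \<alpha> b \<nu> \<longleftrightarrow>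
     \<alpha> > 0 \<and> Y \<in> borel_measurable M \<and> filterlim b at_top sequentially \<and>
     radon_on S \<nu> \<and> emeasure \<nu> (S - {0}) \<noteq> 0 \<and> homogeneous_on S \<alpha> \<nu> \<and>
     vague_conv S (scaled_law M Y b) \<nu>"

definition RV_plus ::
  "'a measure \<Rightarrow> ('a \<Rightarrow> real ^ 'n) \<Rightarrow> real \<Rightarrow> (nat \<Rightarrow> real) \<Rightarrow> (ereal ^ 'n) measure \<Rightarrow> bool" where
  "RV_plus M X \<alpha> b \<nu> \<longleftrightarrow>
     (\<forall>\<omega>\<in>space M. \<forall>i. 0 \<le> X \<omega> $ i) \<and>
     regvar_on Splus M (\<lambda>\<omega>. \<chi> i. ereal (X \<omega> $ i)) \<alpha> b \<nu>"

definition RV ::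
  "'a measure \<Rightarrow> ('a \<Rightarrow> ereal ^ 'n) \<Rightarrow> real \<Rightarrow> (nat \<Rightarrow> real) \<Rightarrow> (ereal ^ 'n) measure \<Rightarrow> bool" where
  "RV M Y \<alpha> b \<nu> \<longleftrightarrow>
     (AE \<omega> in M. \<forall>i. \<bar>Y \<omega> $ i\<bar> \<noteq> \<infinity>) \<and> regvar_on UNIV M Y \<alpha> b \<nu>"

end

theory Submission
  imports Defs
begin

text \<open>For \<open>x > 0\<close> one has \<open>0 \<le> x - t\<^sup>-\<^sup>1(x) \<le> 1 + max 0 (- ln x)\<close>. Hence, off the event that
  some \<open>X\<^sub>i \<le> exp (- k b\<^sub>n)\<close>, whose probability is \<open>o(1/n)\<close> by hypothesis, the vectors
  \<open>b\<^sub>n\<^sup>-\<^sup>1 t\<^sup>-\<^sup>1(X)\<close> and \<open>b\<^sub>n\<^sup>-\<^sup>1 X\<close> are coordinatewise within \<open>1/b\<^sub>n + k\<close> of each other.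
  A test function \<open>f\<close> is uniformly continuous on the compact space \<open>[-\<infinity>,\<infinity>]\<^sup>p\<close>, and its
  support stays away from \<open>0\<close>; so \<open>n \<bar>E f(b\<^sub>n\<^sup>-\<^sup>1 t\<^sup>-\<^sup>1(X)) - E f(b\<^sub>n\<^sup>-\<^sup>1 X)\<bar>\<close> is at most
  \<open>\<epsilon> n E \<phi>(b\<^sub>n\<^sup>-\<^sup>1 X) + o(1)\<close> for a continuous bump \<open>\<phi>\<close> vanishing near \<open>0\<close>, and both
  \<open>n E f(b\<^sub>n\<^sup>-\<^sup>1 X)\<close> and \<open>n E \<phi>(b\<^sub>n\<^sup>-\<^sup>1 X)\<close> converge by the regular variation of \<open>X\<close>.
  The limit measure is \<open>\<nu>\<^sub>X\<close> restricted to \<open>[0,\<infinity>]\<^sup>p\<close>, which inherits the Radon property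
  and the homogeneity of \<open>\<nu>\<^sub>X\<close>.\<close>

section \<open>Uniform continuity on the compactified space\<close>

text \<open>\<open>unsquash\<close> maps \<open>[-1,1]\<close> continuously onto \<open>[-\<infinity>,\<infinity>]\<close> and inverts the 1-Lipschitz map
  \<open>squash\<close> on the reals; uniform continuity on the compact cube thereby transfers to the finite
  points of \<open>[-\<infinity>,\<infinity>]\<^sup>p\<close>.\<close>

definition squash :: "real \<Rightarrow> real" where
  "squash r = r / (1 + \<bar>r\<bar>)"

definition unsquash :: "real \<Rightarrow> ereal" where
  "unsquash t = (if 1 \<le> t then \<infinity> else if t \<le> -1 then -\<infinity> else ereal (t / (1 - \<bar>t\<bar>)))"

lemma abs_squash_less_one: "\<bar>squash r\<bar> < 1"
  unfolding squash_def by (auto simp: abs_div field_simps)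

lemma unsquash_squash: "unsquash (squash r) = ereal r"
proof -
  have "squash r / (1 - \<bar>squash r\<bar>) = r"
    unfolding squash_def by (cases "r \<ge> 0") (auto simp: field_simps abs_div)
  with abs_squash_less_one[of r] show ?thesis
    unfolding unsquash_def by auto
qed

lemma squash_unsquash: "\<bar>t\<bar> < 1 \<Longrightarrow> squash (t / (1 - \<bar>t\<bar>)) = t"
  by (cases "t \<ge> 0") (auto simp: squash_def abs_div field_simps)

lemma frac_one_plus_diff_le: "0 \<le> (s::real) \<Longrightarrow> s \<le> r \<Longrightarrow> r/(1+r) - s/(1+s) \<le> r - s"
proof -
  assume a: "0 \<le> s" "s \<le> r"
  have "r/(1+r) - s/(1+s) = (r - s) / ((1+r)*(1+s))" using a by (simp add: field_simps)
  also have "\<dots> \<le> (r - s) / 1"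
  proof (rule divide_left_mono)
    have "0 \<le> r * s" using a by simp
    then show "1 \<le> (1 + r) * (1 + s)" using a by (simp add: algebra_simps)
  qed (use a in auto)
  finally show ?thesis by simp
qed

lemma squash_diff_le: "s \<le> r \<Longrightarrow> squash r - squash s \<le> r - s"
proof -
  assume sr: "s \<le> r"
  consider "0 \<le> s" | "s < 0" "0 \<le> r" | "r < 0" by linarith
  then show ?thesis
  proof cases
    case 1 then show ?thesis using frac_one_plus_diff_le[OF 1 sr] sr by (simp add: squash_def)
  next
    case 2
    have "r/(1+r) \<le> r" using 2 by (simp add: divide_le_eq algebra_simps)
    moreover have "s * (1 - s) \<le> s" using 2 by (simp add: algebra_simps)
    then have "-s/(1-s) \<le> -s" using 2 by (simp add: le_divide_eq)
    ultimately show ?thesis using 2 by (simp add: squash_def)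
  next
    case 3
    have "(-s)/(1+(-s)) - (-r)/(1+(-r)) \<le> (-s) - (-r)"
      using 3 sr by (intro frac_one_plus_diff_le) auto
    then show ?thesis using 3 sr by (simp add: squash_def)
  qed
qed

lemma mono_squash: "mono squash"
proof
  fix s r :: real assume sr: "s \<le> r"
  consider "s < 0" "0 \<le> r" | "0 \<le> s" | "r < 0" by linarith
  then show "squash s \<le> squash r"
  proof cases
    case 1
    then have "squash s \<le> 0" "0 \<le> squash r" by (simp_all add: squash_def divide_nonpos_pos)
    then show ?thesis by linarith
  next
    case 2 then show ?thesis using sr by (simp add: squash_def divide_le_eq le_divide_eq algebra_simps)
  next
    case 3 then show ?thesis using sr by (simp add: squash_def divide_le_eq le_divide_eq algebra_simps)
  qed
qed

lemma squash_lipschitz: "\<bar>squash r - squash s\<bar> \<le> \<bar>r - s\<bar>"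
  using squash_diff_le[of r s] squash_diff_le[of s r] monoD[OF mono_squash, of r s]
    monoD[OF mono_squash, of s r]
  by (cases "s \<le> r") auto

lemma mono_unsquash: "mono unsquash"
proof
  fix s t :: real assume st: "s \<le> t"
  have "s / (1 - \<bar>s\<bar>) \<le> t / (1 - \<bar>t\<bar>)" if "\<bar>s\<bar> < 1" "\<bar>t\<bar> < 1"
  proof (rule ccontr)
    assume "\<not> ?thesis"
    then have "squash (t / (1 - \<bar>t\<bar>)) \<le> squash (s / (1 - \<bar>s\<bar>))"
      by (intro monoD[OF mono_squash]) simp
    then have "t \<le> s" using squash_unsquash that by simp
    with st \<open>\<not> ?thesis\<close> show False by simp
  qed
  then show "unsquash s \<le> unsquash t" unfolding unsquash_def using st by auto
qed

lemma unsquash_onto: "\<exists>t\<in>{-1..1}. unsquash t = e"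
proof (cases e)
  case (real r)
  then show ?thesis using abs_squash_less_one[of r] unsquash_squash[of r]
    by (intro bexI[of _ "squash r"]) auto
qed (auto simp: unsquash_def intro: bexI[of _ 1] bexI[of _ "-1"])

lemma continuous_on_unsquash: "continuous_on UNIV unsquash"
proof (rule continuous_onI_mono)
  have "range unsquash = UNIV" using unsquash_onto by (metis UNIV_eq_I rangeI)
  then show "open (range unsquash)" by simp
qed (simp add: monoD[OF mono_unsquash])

definition ereal_vec :: "real^'p \<Rightarrow> ereal^'p" where
  "ereal_vec u = (\<chi> i. ereal (u $ i))"

lemma compact_UNIV_ereal_vec: "compact (UNIV :: (ereal^'p) set)"
proof -
  let ?U = "\<lambda>w::real^'p. \<chi> i. unsquash (w $ i)"
  have "continuous_on UNIV ?U"
    by (intro continuous_on_vec_lambda continuous_on_compose2[OF continuous_on_unsquash]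
        continuous_on_component continuous_on_id) auto
  moreover have "x \<in> ?U ` cbox (-1) 1" for x :: "ereal^'p"
  proof -
    obtain w where "\<And>i. w i \<in> {-1..1} \<and> unsquash (w i) = x $ i"
      using choice[of "\<lambda>i t. t \<in> {-1..1} \<and> unsquash t = x $ i"] unsquash_onto by blast
    then show ?thesis
      by (intro image_eqI[of _ _ "\<chi> i. w i"]) (auto simp: vec_eq_iff mem_box_cart)
  qed
  ultimately show ?thesis
    using compact_continuous_image[OF continuous_on_subset compact_cbox, of UNIV ?U "-1" 1]
    by (metis UNIV_eq_I subset_UNIV)
qed

lemma continuous_ereal_vec_bounded:
  fixes f :: "ereal^'p \<Rightarrow> real"
  assumes "continuous_on UNIV f" shows "\<exists>B. \<forall>x. f x \<le> B"
proof -
  obtain B where "\<forall>y\<in>range f. norm y \<le> B"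
    using compact_imp_bounded[OF compact_continuous_image[OF assms compact_UNIV_ereal_vec]]
    unfolding bounded_iff by blast
  then show ?thesis by (metis abs_le_D1 rangeI real_norm_def)
qed

lemma ereal_vec_uniformly_continuous:
  fixes f :: "ereal^'p \<Rightarrow> real"
  assumes f: "continuous_on UNIV f" and "0 < \<epsilon>"
  shows "\<exists>\<delta>>0. \<forall>u v. (\<forall>i. \<bar>u$i - v$i\<bar> < \<delta>) \<longrightarrow> \<bar>f (ereal_vec u) - f (ereal_vec v)\<bar> < \<epsilon>"
proof -
  let ?U = "\<lambda>w::real^'p. \<chi> i. unsquash (w $ i)"
  let ?S = "\<lambda>u::real^'p. \<chi> i. squash (u $ i)"
  have "continuous_on (cbox (-1) 1) (f \<circ> ?U)"
    by (intro continuous_on_compose continuous_on_subset[OF f] continuous_on_vec_lambda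
        continuous_on_compose2[OF continuous_on_unsquash] continuous_on_component continuous_on_id)
      auto
  then have "uniformly_continuous_on (cbox (-1) 1) (f \<circ> ?U)"
    by (simp add: compact_uniformly_continuous)
  then obtain d where d: "d > 0" and dd: "\<And>x x'. x \<in> cbox (-1) 1 \<Longrightarrow> x' \<in> cbox (-1) 1 \<Longrightarrow>
      dist x' x < d \<Longrightarrow> dist ((f \<circ> ?U) x') ((f \<circ> ?U) x) < \<epsilon>"
    unfolding uniformly_continuous_on_def using assms(2) by metis
  have "\<bar>f (ereal_vec u) - f (ereal_vec v)\<bar> < \<epsilon>"
    if uv: "\<forall>i. \<bar>u$i - v$i\<bar> < d / CARD('p)" for u v :: "real^'p"
  proof -
    have cube: "?S w \<in> cbox (-1) 1" for w
      using abs_squash_less_one by (auto simp: mem_box_cart abs_less_iff less_imp_le)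
    have "dist (?S v) (?S u) \<le> (\<Sum>i\<in>UNIV. \<bar>(?S v - ?S u)$i\<bar>)"
      unfolding dist_norm by (rule norm_le_l1_cart)
    also have "\<dots> < (\<Sum>i\<in>(UNIV::'p set). d / CARD('p))"
    proof (rule sum_strict_mono)
      fix i :: 'p
      have "\<bar>(?S v - ?S u)$i\<bar> \<le> \<bar>v$i - u$i\<bar>" by (simp add: squash_lipschitz)
      also have "\<dots> < d / CARD('p)" using uv by (simp add: abs_minus_commute)
      finally show "\<bar>(?S v - ?S u)$i\<bar> < d / CARD('p)" .
    qed auto
    finally have "dist (?S v) (?S u) < d" by simp
    from dd[OF cube cube this] show ?thesis
      by (simp add: ereal_vec_def unsquash_squash dist_real_def abs_minus_commute)
  qed
  then show ?thesis using d by (intro exI[of _ "d / CARD('p)"]) auto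
qed

section \<open>The transform \<open>t\<^sup>-\<^sup>1\<close>\<close>

lemma t_inv_infinity [simp]: "t_inv \<infinity> = \<infinity>" "t_inv (-\<infinity>) = -\<infinity>"
  by (simp_all flip: PInfty_eq_infinity MInfty_eq_minfinity)

lemma mono_t_inv: "mono t_inv"
proof
  fix s t :: ereal assume "s \<le> t"
  moreover have "ln (exp x - 1) \<le> ln (exp y - 1)" if "0 < x" "x \<le> y" for x y :: real
    using that by (subst ln_le_cancel_iff) (auto simp: one_less_exp_iff)
  ultimately show "t_inv s \<le> t_inv t" by (cases s; cases t) auto
qed

lemma surj_t_inv: "surj t_inv"
proof -
  have "e \<in> range t_inv" for e
  proof (cases e)
    case (real r)
    have "0 < ln (1 + exp r)" by (rule ln_gt_zero) simp
    then have "t_inv (ereal (ln (1 + exp r))) = e" using real by (simp add: add_pos_pos)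
    then show ?thesis by (metis rangeI)
  qed (metis rangeI t_inv_infinity)+
  then show ?thesis by auto
qed

lemma continuous_on_t_inv: "continuous_on UNIV t_inv"
  by (rule continuous_onI_mono) (simp_all add: surj_t_inv monoD[OF mono_t_inv])

lemma ln_exp_minus_one_gap:
  fixes x :: real assumes x: "0 < x"
  shows "0 \<le> x - ln (exp x - 1)" "x - ln (exp x - 1) \<le> 1 + max 0 (- ln x)"
proof -
  have e1: "0 < exp x - 1" using x by (simp add: one_less_exp_iff)
  have "ln (exp x - 1) \<le> ln (exp x)" using e1 by (subst ln_le_cancel_iff) auto
  then show "0 \<le> x - ln (exp x - 1)" by simp
  show "x - ln (exp x - 1) \<le> 1 + max 0 (- ln x)"
  proof (cases "x \<ge> 1")
    case True
    have "exp x = exp (x - 1) * exp 1" by (simp flip: exp_add)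
    moreover have "2 \<le> exp (1::real)" using exp_ge_add_one_self[of 1] by simp
    moreover have "1 \<le> exp (x - 1)" using True by simp
    ultimately have "exp (x - 1) * 2 \<le> exp x" by (metis mult_left_mono exp_ge_zero)
    with \<open>1 \<le> exp (x - 1)\<close> have "exp (x - 1) \<le> exp x - 1" by linarith
    then have "x - 1 \<le> ln (exp x - 1)" using e1 by (metis exp_gt_zero ln_exp ln_le_cancel_iff)
    then show ?thesis by simp
  next
    case False
    have "x \<le> exp x - 1" using exp_ge_add_one_self[of x] by linarith
    then have "ln x \<le> ln (exp x - 1)" using x by (subst ln_le_cancel_iff) auto
    then show ?thesis using False by simp
  qed
qed

lemma scaled_t_inv_gap:
  fixes x b k :: real
  assumes "0 < b" "0 < k" "exp (- k * b) < x"
  shows "\<bar>x / b - ln (exp x - 1) / b\<bar> < inverse b + k"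
proof -
  have x: "0 < x" using assms(3) exp_gt_zero order.strict_trans by blast
  have "- k * b < ln x" using assms(3) x by (metis ln_exp ln_less_cancel_iff exp_gt_zero)
  moreover have "0 < k * b" using assms(1,2) by simp
  ultimately have "max 0 (- ln x) < k * b" by simp
  then have "x - ln (exp x - 1) < 1 + k * b" using ln_exp_minus_one_gap(2)[OF x] by linarith
  then have "(x - ln (exp x - 1)) / b < (1 + k * b) / b" using assms(1) by (simp add: divide_strict_right_mono)
  moreover have "(1 + k * b) / b = inverse b + k" using assms(1) by (simp add: field_simps)
  ultimately show ?thesis
    using ln_exp_minus_one_gap(1)[OF x] assms(1) by (simp add: diff_divide_distrib[symmetric])
qed

section \<open>Test functions\<close>

lemma closed_Splus: "closed Splus"
  unfolding Splus_def
  by (simp add: Collect_all_eq closed_INT closed_Collect_le continuous_on_component continuous_on_id)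

lemma borel_ereal_vec_nonzero: "UNIV - {0 :: ereal^'p} \<in> sets borel"
proof -
  have "{0 :: ereal^'p} = {x. \<forall>i. x $ i = 0}" by (auto simp: vec_eq_iff)
  then have "closed {0 :: ereal^'p}"
    by (simp add: Collect_all_eq closed_INT closed_Collect_eq continuous_on_component continuous_on_id)
  then show ?thesis by (intro borel_open open_Diff open_UNIV)
qed

lemma ereal_less_abs_iff: "0 \<le> \<eta> \<Longrightarrow> ereal \<eta> < \<bar>e\<bar> \<longleftrightarrow> ereal \<eta> < e \<or> e < - ereal \<eta>"
  by (cases e) auto

lemma compact_avoiding_zero_coord_bound:
  fixes K :: "(ereal^'p) set"
  assumes K: "compact K" "0 \<notin> K"
  shows "\<exists>\<eta>>0. \<forall>x\<in>K. \<exists>i. ereal \<eta> < \<bar>x$i\<bar>"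
proof -
  define U where "U = (\<lambda>(\<eta>::real, i::'p). {x::ereal^'p. ereal \<eta> < \<bar>x$i\<bar>})"
  define C where "C = {c::real \<times> 'p. 0 < fst c}"
  have "open (U c)" if "c \<in> C" for c
  proof -
    obtain \<eta> i where c: "c = (\<eta>, i)" by force
    with that have "U c = (\<lambda>x. x$i) -` ({ereal \<eta><..} \<union> {..< - ereal \<eta>})"
      by (auto simp: U_def C_def ereal_less_abs_iff)
    then show ?thesis by (simp add: open_vimage_vec_nth open_Un)
  qed
  moreover have "K \<subseteq> (\<Union>c\<in>C. U c)"
  proof
    fix x assume "x \<in> K"
    then obtain i where xi: "x$i \<noteq> 0" using K(2) by (metis vec_eq_iff zero_index)
    define \<eta> where "\<eta> = (if \<bar>x$i\<bar> = \<infinity> then 1 else \<bar>real_of_ereal (x$i)\<bar> / 2)"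
    have "0 < \<eta> \<and> ereal \<eta> < \<bar>x$i\<bar>" using xi by (cases "x$i") (auto simp: \<eta>_def)
    then show "x \<in> (\<Union>c\<in>C. U c)" by (auto simp: C_def U_def intro!: bexI[of _ "(\<eta>, i)"])
  qed
  ultimately obtain C' where C': "C' \<subseteq> C" "finite C'" "K \<subseteq> (\<Union>c\<in>C'. U c)"
    using compactE_image[OF K(1)] by metis
  define \<eta>0 where "\<eta>0 = Min (insert 1 (fst ` C'))"
  have "\<eta>0 > 0" using C' by (auto simp: \<eta>0_def C_def)
  moreover have "\<exists>i. ereal \<eta>0 < \<bar>x$i\<bar>" if x: "x \<in> K" for x
  proof -
    obtain c where "c \<in> C'" "x \<in> U c" using C'(3) x by blast
    moreover obtain \<eta> i where "c = (\<eta>, i)" by force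
    ultimately have c: "(\<eta>, i) \<in> C'" "x \<in> U (\<eta>, i)" by simp_all
    then have "\<eta>0 \<le> \<eta>" unfolding \<eta>0_def using C'(2) by (intro Min_le) force+
    moreover have "ereal \<eta> < \<bar>x$i\<bar>" using c(2) by (simp add: U_def)
    ultimately show ?thesis by (meson ereal_less_eq(3) order.strict_trans1)
  qed
  ultimately show ?thesis by blast
qed

lemma closed_coord_ge: "closed {x :: ereal^'p. \<exists>i. ereal a \<le> x$i}"
proof -
  have "{x :: ereal^'p. \<exists>i. ereal a \<le> x$i} = (\<Union>i. (\<lambda>x. x$i) -` {ereal a..})" by auto
  then show ?thesis by (simp add: closed_UN closed_vimage_vec_nth)
qed

lemma closed_coord_abs_ge:
  assumes "0 < a" shows "closed {x :: ereal^'p. \<exists>i. ereal a \<le> \<bar>x$i\<bar>}"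
proof -
  have "ereal a \<le> \<bar>e\<bar> \<longleftrightarrow> ereal a \<le> e \<or> e \<le> - ereal a" for e
    using assms by (cases e) auto
  then have "{x :: ereal^'p. \<exists>i. ereal a \<le> \<bar>x$i\<bar>}
      = (\<Union>i. (\<lambda>x. x$i) -` ({ereal a..} \<union> {..- ereal a}))" by auto
  then show ?thesis by (simp add: closed_UN closed_vimage_vec_nth closed_Un)
qed

definition ramp :: "real \<Rightarrow> ereal \<Rightarrow> real" where
  "ramp a e = (real_of_ereal (min (ereal (2*a)) (max (ereal a) e)) - a) / a"

lemma ramp_props:
  assumes a: "0 < a"
  shows "0 \<le> ramp a e" "ramp a e \<le> 1" "ereal (2*a) \<le> e \<Longrightarrow> ramp a e = 1"
    "ramp a e \<noteq> 0 \<Longrightarrow> ereal a \<le> e"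
proof -
  define r where "r = min (2*a) (max a (case e of ereal x \<Rightarrow> x | PInfty \<Rightarrow> 2*a | MInfty \<Rightarrow> a))"
  have r: "a \<le> r" "r \<le> 2*a" using a by (auto simp: r_def)
  have ramp_r: "ramp a e = (r - a) / a"
    unfolding ramp_def r_def using a by (cases e) (auto simp: min_def max_def)
  show "0 \<le> ramp a e" "ramp a e \<le> 1" unfolding ramp_r using r a by auto
  show "ereal (2*a) \<le> e \<Longrightarrow> ramp a e = 1"
    unfolding ramp_r r_def using a by (cases e) auto
  show "ramp a e \<noteq> 0 \<Longrightarrow> ereal a \<le> e"
    unfolding ramp_r r_def using a by (cases e) auto
qed

lemma continuous_on_ramp: "0 < a \<Longrightarrow> continuous_on UNIV (ramp a)"
proof -
  assume a: "0 < a"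
  let ?cl = "\<lambda>e::ereal. min (ereal (2*a)) (max (ereal a) e)"
  have "continuous_on (range ?cl) real_of_ereal"
  proof (rule continuous_at_imp_continuous_on, rule ballI)
    fix y assume "y \<in> range ?cl"
    then have "\<bar>y\<bar> \<noteq> \<infinity>" using a by (auto simp: min_def max_def)
    then show "isCont real_of_ereal y" by (rule continuous_at_of_ereal)
  qed
  moreover have "continuous_on UNIV ?cl"
    by (intro continuous_on_min continuous_on_max continuous_on_const continuous_on_id)
  ultimately have "continuous_on UNIV (\<lambda>e. real_of_ereal (?cl e))"
    by (rule continuous_on_compose2) auto
  then show ?thesis unfolding ramp_def[abs_def] using a by (intro continuous_intros) auto
qed

definition coord_bump :: "real \<Rightarrow> ereal^'p \<Rightarrow> real" where
  "coord_bump a x = (\<Sum>i\<in>UNIV. ramp a (x$i))"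

lemma coord_bump_props:
  fixes x :: "ereal^'p" and u :: "real^'p"
  assumes a: "0 < a"
  shows "continuous_on UNIV (coord_bump a :: ereal^'p \<Rightarrow> real)"
    and "0 \<le> coord_bump a x" "coord_bump a x \<le> CARD('p)"
    and "coord_bump a x \<noteq> 0 \<Longrightarrow> \<exists>i. ereal a \<le> x$i"
    and "2 * a \<le> u$j \<Longrightarrow> 1 \<le> coord_bump a (ereal_vec u)"
proof -
  show "continuous_on UNIV (coord_bump a :: ereal^'p \<Rightarrow> real)" unfolding coord_bump_def[abs_def]
    by (intro continuous_on_sum continuous_on_compose2[OF continuous_on_ramp[OF a]]
        continuous_on_component continuous_on_id) auto
  show "0 \<le> coord_bump a x" unfolding coord_bump_def by (simp add: sum_nonneg ramp_props[OF a])
  have "coord_bump a x \<le> (\<Sum>i\<in>(UNIV::'p set). 1)"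
    unfolding coord_bump_def by (intro sum_mono) (rule ramp_props(2)[OF a])
  then show "coord_bump a x \<le> CARD('p)" by simp
  show "coord_bump a x \<noteq> 0 \<Longrightarrow> \<exists>i. ereal a \<le> x$i"
    unfolding coord_bump_def using ramp_props(4)[OF a] by (metis (no_types) sum.neutral)
  assume "2 * a \<le> u$j"
  then have "1 = ramp a (ereal (u$j))" by (simp add: ramp_props(3)[OF a])
  also have "\<dots> \<le> coord_bump a (ereal_vec u)"
    unfolding coord_bump_def ereal_vec_def
    using member_le_sum[of j UNIV "\<lambda>i. ramp a (ereal (u$i))"] ramp_props(1)[OF a] by simp
  finally show "1 \<le> coord_bump a (ereal_vec u)" .
qed

lemma test_function_diff_le:
  fixes f \<phi> :: "ereal^'p \<Rightarrow> real" and u v :: "real^'p"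
  assumes supp: "\<And>x. f x \<noteq> 0 \<Longrightarrow> \<exists>i. ereal \<eta> \<le> \<bar>x$i\<bar>"
    and dom: "\<And>j. \<eta>/2 \<le> u$j \<Longrightarrow> 1 \<le> \<phi> (ereal_vec u)" and "0 \<le> \<phi> (ereal_vec u)"
    and u: "\<And>i. 0 \<le> u$i" and uv: "\<And>i. \<bar>u$i - v$i\<bar> < \<eta>/2"
    and f: "\<bar>f (ereal_vec u) - f (ereal_vec v)\<bar> < \<epsilon>"
  shows "\<bar>f (ereal_vec u) - f (ereal_vec v)\<bar> \<le> \<epsilon> * \<phi> (ereal_vec u)"
proof (cases "f (ereal_vec u) = 0 \<and> f (ereal_vec v) = 0")
  case True
  with f assms(3) show ?thesis by simp
next
  case False
  then have "\<exists>j. ereal \<eta> \<le> \<bar>ereal (u$j)\<bar> \<or> ereal \<eta> \<le> \<bar>ereal (v$j)\<bar>"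
    using supp[of "ereal_vec u"] supp[of "ereal_vec v"] by (auto simp: ereal_vec_def)
  then obtain j where "\<eta> \<le> \<bar>u$j\<bar> \<or> \<eta> \<le> \<bar>v$j\<bar>" by auto
  then have "\<eta>/2 \<le> u$j" using u[of j] uv[of j] by arith
  then have "1 \<le> \<phi> (ereal_vec u)" by (rule dom)
  moreover have "0 < \<epsilon>" using f by linarith
  ultimately have "\<epsilon> \<le> \<epsilon> * \<phi> (ereal_vec u)" by simp
  with f show ?thesis by linarith
qed

lemma continuous_on_ereal_vec_scale: "continuous_on UNIV (\<lambda>x::ereal^'p. \<chi> i. ereal c * x$i)"
  by (intro continuous_on_vec_lambda continuous_on_cmult_ereal continuous_on_component
      continuous_on_id) simp

section \<open>Expectations under the scaled laws\<close>

lemma nn_integral_scaled_distr: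
  fixes T :: "'a \<Rightarrow> ereal^'p" and h :: "ereal^'p \<Rightarrow> real"
  assumes "prob_space M" and T: "T \<in> M \<rightarrow>\<^sub>M borel" and h: "h \<in> borel_measurable borel"
    and h0: "\<And>x. 0 \<le> h x" and hB: "\<And>x. h x \<le> B" and "h 0 = 0"
    and S: "S \<in> sets borel" and TS: "\<And>\<omega>. \<omega> \<in> space M \<Longrightarrow> T \<omega> \<in> S"
  shows "(\<integral>\<^sup>+x\<in>S - {0}. ennreal (h x) \<partial>scale_measure (of_nat n) (distr M borel T))
       = ennreal (real n * (\<integral>\<omega>. h (T \<omega>) \<partial>M))"
proof -
  interpret prob_space M by fact
  have "S - {0} = S \<inter> (UNIV - {0})" by blast
  then have "S - {0} \<in> sets borel" using sets.Int[OF S borel_ereal_vec_nonzero] by simp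
  then have hm: "(\<lambda>x. ennreal (h x) * indicator (S - {0}) x) \<in> borel_measurable borel"
    using h by (intro borel_measurable_times_ennreal borel_measurable_indicator
        measurable_compose[OF h measurable_ennreal])
  have "(\<integral>\<^sup>+x\<in>S - {0}. ennreal (h x) \<partial>scale_measure (of_nat n) (distr M borel T))
      = of_nat n * (\<integral>\<^sup>+x. ennreal (h x) * indicator (S - {0}) x \<partial>distr M borel T)"
    by (rule nn_integral_scale_measure) (use hm in simp)
  also have "(\<integral>\<^sup>+x. ennreal (h x) * indicator (S - {0}) x \<partial>distr M borel T)
      = (\<integral>\<^sup>+\<omega>. ennreal (h (T \<omega>)) * indicator (S - {0}) (T \<omega>) \<partial>M)"
    by (rule nn_integral_distr[OF T]) (use hm in simp)
  also have "(\<integral>\<^sup>+\<omega>. ennreal (h (T \<omega>)) * indicator (S - {0}) (T \<omega>) \<partial>M) = (\<integral>\<^sup>+\<omega>. ennreal (h (T \<omega>)) \<partial>M)"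
    by (rule nn_integral_cong) (use TS \<open>h 0 = 0\<close> in \<open>auto simp: indicator_def\<close>)
  also have "\<dots> = ennreal (\<integral>\<omega>. h (T \<omega>) \<partial>M)"
    by (rule nn_integral_eq_integral) (use h0 hB T h in \<open>auto intro: integrable_const_bound[where B=B]\<close>)
  finally show ?thesis
    using h0 by (simp add: ennreal_of_nat_eq_real_of_nat ennreal_mult integral_nonneg)
qed

lemma vague_conv_expectation_tendsto:
  fixes Z :: "'a \<Rightarrow> ereal^'p" and h :: "ereal^'p \<Rightarrow> real"
  assumes M: "prob_space M" and Zm: "Z \<in> M \<rightarrow>\<^sub>M borel"
    and ZS: "\<And>\<omega>. \<omega> \<in> space M \<Longrightarrow> Z \<omega> \<in> Splus"
    and vc: "vague_conv Splus (scaled_law M Z b) \<nu>" and rad: "radon_on Splus \<nu>"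
    and b: "filterlim b at_top sequentially"
    and hc: "continuous_on UNIV h" and h0: "\<And>x. 0 \<le> h x" and hB: "\<And>x. h x \<le> B"
    and C: "closed C" "0 \<notin> C" and hC: "\<And>x. h x \<noteq> 0 \<Longrightarrow> x \<in> C"
  shows "\<exists>l\<ge>0. (\<lambda>n. real n * (\<integral>\<omega>. h (\<chi> i. ereal (inverse (b n)) * Z \<omega> $ i) \<partial>M)) \<longlonglongrightarrow> l
           \<and> (\<integral>\<^sup>+x\<in>Splus - {0}. ennreal (h x) \<partial>\<nu>) = ennreal l"
proof -
  let ?L = "\<integral>\<^sup>+x\<in>Splus - {0}. ennreal (h x) \<partial>\<nu>"
  define K where "K = Splus \<inter> C"
  have K: "compact K" "K \<subseteq> Splus - {0}"
    using compact_Int_closed[OF compact_UNIV_ereal_vec, of K] closed_Splus C by (auto simp: K_def)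
  have "continuous_on Splus h \<and> (\<forall>x\<in>Splus. 0 \<le> h x) \<and>
      (\<exists>K. compact K \<and> K \<subseteq> Splus - {0} \<and> (\<forall>x\<in>Splus - K. h x = 0))"
    using K hC h0 by (auto intro!: exI[of _ K] continuous_on_subset[OF hc] simp: K_def)
  then have lim: "(\<lambda>n. \<integral>\<^sup>+x\<in>Splus - {0}. ennreal (h x) \<partial>scaled_law M Z b n) \<longlonglongrightarrow> ?L"
    using vc unfolding vague_conv_def by blast
  have sets: "sets \<nu> = sets borel" using rad by (simp add: radon_on_def)
  have "?L \<le> (\<integral>\<^sup>+x. ennreal B * indicator K x \<partial>\<nu>)"
    using hC hB by (intro nn_integral_mono) (force simp: indicator_def K_def intro: ennreal_leI)
  also have "\<dots> = ennreal B * emeasure \<nu> K"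
    by (rule nn_integral_cmult_indicator)
      (use closed_Splus C(1) in \<open>unfold sets K_def, intro borel_closed closed_Int\<close>)
  also have "\<dots> < \<infinity>" using rad K unfolding radon_on_def by (simp add: ennreal_mult_less_top)
  finally obtain l where l: "l \<ge> 0" "?L = ennreal l" by (cases ?L) auto
  have "\<forall>\<^sub>F n in sequentially. (\<integral>\<^sup>+x\<in>Splus - {0}. ennreal (h x) \<partial>scaled_law M Z b n)
      = ennreal (real n * (\<integral>\<omega>. h (\<chi> i. ereal (inverse (b n)) * Z \<omega> $ i) \<partial>M))"
    using b unfolding filterlim_at_top_dense
  proof (rule eventually_mono[OF spec[of _ 0]])
    fix n assume "0 < b n"
    then show "(\<integral>\<^sup>+x\<in>Splus - {0}. ennreal (h x) \<partial>scaled_law M Z b n)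
      = ennreal (real n * (\<integral>\<omega>. h (\<chi> i. ereal (inverse (b n)) * Z \<omega> $ i) \<partial>M))"
      unfolding scaled_law_def
      using ZS hC C(2) borel_closed[OF closed_Splus]
        measurable_compose[OF Zm borel_measurable_continuous_onI[OF continuous_on_ereal_vec_scale]]
      by (intro nn_integral_scaled_distr[OF M _ borel_measurable_continuous_onI[OF hc] h0 hB])
        (auto simp: Splus_def)
  qed
  from Lim_transform_eventually[OF lim this]
  have "(\<lambda>n. ennreal (real n * (\<integral>\<omega>. h (\<chi> i. ereal (inverse (b n)) * Z \<omega> $ i) \<partial>M))) \<longlonglongrightarrow> ennreal l"
    by (simp only: l(2))
  then have "(\<lambda>n. real n * (\<integral>\<omega>. h (\<chi> i. ereal (inverse (b n)) * Z \<omega> $ i) \<partial>M)) \<longlonglongrightarrow> l"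
    using l h0 by (subst (asm) tendsto_ennreal_iff) (auto intro!: always_eventually integral_nonneg)
  with l show ?thesis by blast
qed

lemma borel_measurable_vec_map:
  fixes X :: "'a \<Rightarrow> 'b::topological_space^'p" and g :: "'b \<Rightarrow> 'c::topological_space"
  assumes "continuous_on UNIV g" "X \<in> borel_measurable M"
  shows "(\<lambda>\<omega>. \<chi> i. g (X \<omega> $ i)) \<in> borel_measurable M"
  by (rule measurable_compose[OF assms(2) borel_measurable_continuous_onI])
    (intro continuous_on_vec_lambda continuous_on_compose2[OF assms(1)] continuous_on_component
      continuous_on_id; simp)

lemma borel_measurable_vec_component:
  fixes X :: "'a \<Rightarrow> 'b::topological_space^'p"
  shows "X \<in> borel_measurable M \<Longrightarrow> (\<lambda>\<omega>. X \<omega> $ i) \<in> borel_measurable M"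
  by (erule measurable_compose[OF _ borel_measurable_continuous_onI])
    (intro continuous_on_component continuous_on_id)

text \<open>Off the event that some \<open>x$i \<le> exp (- k b)\<close>, the vectors \<open>b\<^sup>-\<^sup>1 x\<close> and \<open>b\<^sup>-\<^sup>1 t\<^sup>-\<^sup>1(x)\<close>
  are coordinatewise \<open>\<delta>\<close>-close by \<open>scaled_t_inv_gap\<close>; on that event the difference is at most \<open>B\<close>.\<close>

lemma test_function_t_inv_diff_le:
  fixes x :: "real^'p" and f \<phi> :: "ereal^'p \<Rightarrow> real"
  assumes f: "\<And>x. 0 \<le> f x" "\<And>x. f x \<le> B" and \<phi>: "\<And>x. 0 \<le> \<phi> x"
    and close: "\<And>u v. (\<And>i. 0 \<le> u$i) \<Longrightarrow> (\<And>i. \<bar>u$i - v$i\<bar> < \<delta>) \<Longrightarrow>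
       \<bar>f (ereal_vec u) - f (ereal_vec v)\<bar> \<le> \<epsilon> * \<phi> (ereal_vec u)"
    and b: "0 < b" and k: "0 < k" "inverse b + k \<le> \<delta>" and \<epsilon>: "0 \<le> \<epsilon>" and x: "\<And>i. 0 \<le> x$i"
  shows "\<bar>f (\<chi> i. ereal (inverse b) * t_inv (ereal (x$i))) - f (\<chi> i. ereal (inverse b) * ereal (x$i))\<bar>
         \<le> \<epsilon> * \<phi> (\<chi> i. ereal (inverse b) * ereal (x$i)) + B * (\<Sum>i\<in>UNIV. of_bool (x$i \<le> exp (- k * b)))"
    (is "\<bar>f ?y - f ?x\<bar> \<le> \<epsilon> * \<phi> ?x + B * ?N")
proof (cases "\<exists>j. x$j \<le> exp (- k * b)")
  case True
  then obtain j where "x$j \<le> exp (- k * b)" by blast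
  then have "1 \<le> ?N" using member_le_sum[of j UNIV "\<lambda>i. of_bool (x$i \<le> exp (- k * b)) :: real"] by simp
  then have "B \<le> B * ?N" using f order_trans by (metis mult_le_cancel_left1 not_le)
  moreover have "\<bar>f ?y - f ?x\<bar> \<le> B" using f[of ?y] f[of ?x] by (simp add: abs_le_iff)
  moreover have "0 \<le> \<epsilon> * \<phi> ?x" using \<epsilon> \<phi> by simp
  ultimately show ?thesis by linarith
next
  case False
  then have X: "exp (- k * b) < x$i" for i by (simp add: not_le)
  then have "0 < x$i" for i using exp_gt_zero order.strict_trans by blast
  then have u: "?x = ereal_vec (\<chi> i. x$i / b)" and v: "?y = ereal_vec (\<chi> i. ln (exp (x$i) - 1) / b)"
    by (simp_all add: ereal_vec_def vec_eq_iff not_le divide_inverse mult.commute)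
  have "\<bar>f ?x - f ?y\<bar> \<le> \<epsilon> * \<phi> ?x"
    unfolding u v
  proof (rule close)
    fix i
    show "0 \<le> (\<chi> i. x$i / b) $ i" using x b by simp
    show "\<bar>(\<chi> i. x$i / b) $ i - (\<chi> i. ln (exp (x$i) - 1) / b) $ i\<bar> < \<delta>"
      using scaled_t_inv_gap[OF b k(1) X, of i] k(2) by simp
  qed
  with False show ?thesis by (simp add: abs_minus_commute)
qed

lemma expectation_diff_t_inv_le:
  fixes X :: "'a \<Rightarrow> real^'p" and f \<phi> :: "ereal^'p \<Rightarrow> real"
  assumes "prob_space M" and Xm: "X \<in> borel_measurable M"
    and Xnn: "\<And>\<omega> i. \<omega> \<in> space M \<Longrightarrow> 0 \<le> X \<omega> $ i"
    and f: "f \<in> borel_measurable borel" "\<And>x. 0 \<le> f x" "\<And>x. f x \<le> B"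
    and \<phi>: "\<phi> \<in> borel_measurable borel" "\<And>x. 0 \<le> \<phi> x" "\<And>x. \<phi> x \<le> C"
    and close: "\<And>u v. (\<And>i. 0 \<le> u$i) \<Longrightarrow> (\<And>i. \<bar>u$i - v$i\<bar> < \<delta>) \<Longrightarrow>
       \<bar>f (ereal_vec u) - f (ereal_vec v)\<bar> \<le> \<epsilon> * \<phi> (ereal_vec u)"
    and b: "0 < b" and k: "0 < k" "inverse b + k \<le> \<delta>" and \<epsilon>: "0 \<le> \<epsilon>"
  shows "\<bar>(\<integral>\<omega>. f (\<chi> i. ereal (inverse b) * t_inv (ereal (X \<omega> $ i))) \<partial>M)
           - (\<integral>\<omega>. f (\<chi> i. ereal (inverse b) * ereal (X \<omega> $ i)) \<partial>M)\<bar>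
         \<le> \<epsilon> * (\<integral>\<omega>. \<phi> (\<chi> i. ereal (inverse b) * ereal (X \<omega> $ i)) \<partial>M)
           + B * (\<Sum>i\<in>UNIV. measure M {\<omega> \<in> space M. X \<omega> $ i \<le> exp (- k * b)})"
proof -
  interpret prob_space M by fact
  define Xb where "Xb \<omega> = (\<chi> i. ereal (inverse b) * ereal (X \<omega> $ i))" for \<omega>
  define Yb where "Yb \<omega> = (\<chi> i. ereal (inverse b) * t_inv (ereal (X \<omega> $ i)))" for \<omega>
  define A where "A i = {\<omega> \<in> space M. X \<omega> $ i \<le> exp (- k * b)}" for i
  define D where "D \<omega> = \<epsilon> * \<phi> (Xb \<omega>) + B * (\<Sum>i\<in>UNIV. indicator (A i) \<omega>)" for \<omega>
  have Xbm: "Xb \<in> borel_measurable M" unfolding Xb_def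
    by (intro borel_measurable_vec_map[OF _ Xm] continuous_on_cmult_ereal continuous_on_ereal
        continuous_on_id) simp
  have Ybm: "Yb \<in> borel_measurable M" unfolding Yb_def
    by (intro borel_measurable_vec_map[OF _ Xm] continuous_on_cmult_ereal
        continuous_on_compose2[OF continuous_on_t_inv] continuous_on_ereal continuous_on_id) auto
  have Am: "A i \<in> sets M" for i
    using borel_measurable_vec_component[OF Xm] unfolding A_def by measurable
  have pointwise: "\<bar>f (Yb \<omega>) - f (Xb \<omega>)\<bar> \<le> D \<omega>" if "\<omega> \<in> space M" for \<omega>
    using test_function_t_inv_diff_le[where f=f and \<phi>=\<phi> and x="X \<omega>",
        OF f(2,3) \<phi>(2) close b k \<epsilon> Xnn[OF that]] that
    by (simp add: Xb_def Yb_def D_def A_def indicator_def of_bool_def)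
  have fY: "integrable M (\<lambda>\<omega>. f (Yb \<omega>))"
    using f measurable_compose[OF Ybm f(1)] by (intro integrable_const_bound[where B=B]) auto
  have fX: "integrable M (\<lambda>\<omega>. f (Xb \<omega>))"
    using f measurable_compose[OF Xbm f(1)] by (intro integrable_const_bound[where B=B]) auto
  have \<phi>X: "integrable M (\<lambda>\<omega>. \<phi> (Xb \<omega>))"
    using \<phi> measurable_compose[OF Xbm \<phi>(1)] by (intro integrable_const_bound[where B=C]) auto
  have IA: "integrable M (indicator (A i) :: 'a \<Rightarrow> real)" for i
    using Am by (intro integrable_const_bound[where B=1]) auto
  have ID: "integrable M D" unfolding D_def using \<phi>X IA by simp
  have "\<bar>(\<integral>\<omega>. f (Yb \<omega>) \<partial>M) - (\<integral>\<omega>. f (Xb \<omega>) \<partial>M)\<bar> = \<bar>\<integral>\<omega>. f (Yb \<omega>) - f (Xb \<omega>) \<partial>M\<bar>"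
    using fY fX by simp
  also have "\<dots> \<le> (\<integral>\<omega>. \<bar>f (Yb \<omega>) - f (Xb \<omega>)\<bar> \<partial>M)" by (rule integral_abs_bound)
  also have "\<dots> \<le> integral\<^sup>L M D"
    using pointwise fY fX ID by (intro integral_mono) auto
  also have "\<dots> = \<epsilon> * (\<integral>\<omega>. \<phi> (Xb \<omega>) \<partial>M) + B * (\<Sum>i\<in>UNIV. \<integral>\<omega>. indicator (A i) \<omega> \<partial>M)"
    using \<phi>X IA unfolding D_def by (simp add: integral_sum)
  also have "\<dots> = \<epsilon> * (\<integral>\<omega>. \<phi> (Xb \<omega>) \<partial>M) + B * (\<Sum>i\<in>UNIV. measure M (A i))"
    using Am by (simp add: Int_absorb2 sets.sets_into_space)
  finally show ?thesis by (simp add: Xb_def Yb_def A_def)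
qed

lemma tendsto_of_approximate_difference:
  fixes a c y :: "nat \<Rightarrow> real"
  assumes a: "a \<longlonglongrightarrow> l" and c: "c \<longlonglongrightarrow> m"
    and approx: "\<And>\<epsilon>. 0 < \<epsilon> \<Longrightarrow>
       \<exists>r. r \<longlonglongrightarrow> 0 \<and> (\<forall>\<^sub>F n in sequentially. \<bar>y n - a n\<bar> \<le> \<epsilon> * c n + r n)"
  shows "y \<longlonglongrightarrow> l"
proof -
  have "(\<lambda>n. y n - a n) \<longlonglongrightarrow> 0"
  proof (rule tendstoI)
    fix e :: real assume e: "0 < e"
    define \<epsilon> where "\<epsilon> = e / (2 * (\<bar>m\<bar> + 1))"
    have \<epsilon>: "0 < \<epsilon>" "\<epsilon> * (\<bar>m\<bar> + 1) = e / 2"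
      using e by (auto simp: \<epsilon>_def field_simps add_pos_nonneg)
    obtain r where r: "r \<longlonglongrightarrow> 0"
      and bound: "\<forall>\<^sub>F n in sequentially. \<bar>y n - a n\<bar> \<le> \<epsilon> * c n + r n"
      using approx[OF \<epsilon>(1)] by blast
    have "\<forall>\<^sub>F n in sequentially. c n < \<bar>m\<bar> + 1" using c by (rule order_tendstoD) simp
    moreover have "\<forall>\<^sub>F n in sequentially. r n < e / 2" using r e by (intro order_tendstoD) auto
    ultimately show "\<forall>\<^sub>F n in sequentially. dist (y n - a n) 0 < e"
      using bound
    proof eventually_elim
      case (elim n)
      then have "\<epsilon> * c n < e / 2" using \<epsilon> by (metis mult_strict_left_mono)
      with elim show ?case by (simp add: dist_real_def)
    qed
  qed
  from tendsto_add[OF a this] show ?thesis by simp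
qed

lemma expectation_t_inv_tendsto:
  fixes X :: "'a \<Rightarrow> real^'p" and f :: "ereal^'p \<Rightarrow> real"
  assumes M: "prob_space M" and Xm: "X \<in> borel_measurable M"
    and Xnn: "\<And>\<omega> i. \<omega> \<in> space M \<Longrightarrow> 0 \<le> X \<omega> $ i" and b: "filterlim b at_top sequentially"
    and tail: "\<And>k i. 0 < k \<Longrightarrow>
       (\<lambda>n. real n * measure M {\<omega> \<in> space M. X \<omega> $ i \<le> exp (- k * b n)}) \<longlonglongrightarrow> 0"
    and fc: "continuous_on UNIV f" and f0: "\<And>x. 0 \<le> f x" and fB: "\<And>x. f x \<le> B"
    and \<eta>: "0 < \<eta>" and supp: "\<And>x. f x \<noteq> 0 \<Longrightarrow> \<exists>i. ereal \<eta> \<le> \<bar>x$i\<bar>"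
    and lim_f: "(\<lambda>n. real n * (\<integral>\<omega>. f (\<chi> i. ereal (inverse (b n)) * ereal (X \<omega> $ i)) \<partial>M)) \<longlonglongrightarrow> l"
    and lim_bump: "(\<lambda>n. real n * (\<integral>\<omega>. coord_bump (\<eta>/4) (\<chi> i. ereal (inverse (b n)) * ereal (X \<omega> $ i)) \<partial>M))
       \<longlonglongrightarrow> m"
  shows "(\<lambda>n. real n * (\<integral>\<omega>. f (\<chi> i. ereal (inverse (b n)) * t_inv (ereal (X \<omega> $ i))) \<partial>M)) \<longlonglongrightarrow> l"
proof -
  let ?\<phi> = "coord_bump (\<eta>/4) :: ereal^'p \<Rightarrow> real"
  have "0 < \<eta>/4" using \<eta> by simp
  note \<phi> = coord_bump_props[OF this]
  define x where "x n = real n * (\<integral>\<omega>. f (\<chi> i. ereal (inverse (b n)) * ereal (X \<omega> $ i)) \<partial>M)" for n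
  define y where "y n = real n * (\<integral>\<omega>. f (\<chi> i. ereal (inverse (b n)) * t_inv (ereal (X \<omega> $ i))) \<partial>M)" for n
  define c where "c n = real n * (\<integral>\<omega>. ?\<phi> (\<chi> i. ereal (inverse (b n)) * ereal (X \<omega> $ i)) \<partial>M)" for n
  have "y \<longlonglongrightarrow> l"
  proof (rule tendsto_of_approximate_difference[OF lim_f[folded x_def] lim_bump[folded c_def]])
    fix \<epsilon> :: real assume \<epsilon>: "0 < \<epsilon>"
    obtain \<delta>0 where \<delta>0: "0 < \<delta>0" and unif: "\<And>u v. (\<forall>i. \<bar>u$i - v$i\<bar> < \<delta>0) \<Longrightarrow>
        \<bar>f (ereal_vec u) - f (ereal_vec v)\<bar> < \<epsilon>"
      using ereal_vec_uniformly_continuous[OF fc \<epsilon>] by blast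
    define \<delta> where "\<delta> = min \<delta>0 (\<eta>/2)"
    have \<delta>: "0 < \<delta>" using \<delta>0 \<eta> by (simp add: \<delta>_def)
    \<comment> \<open>As \<open>\<delta> \<le> \<eta>/2\<close>, wherever \<open>f\<close> is nonzero at \<open>u\<close> or at a \<open>\<delta>\<close>-close \<open>v\<close>,
      some \<open>u$j \<ge> \<eta>/2\<close>, so the bump is \<open>\<ge> 1\<close> at \<open>u\<close>.\<close>
    have close: "\<bar>f (ereal_vec u) - f (ereal_vec v)\<bar> \<le> \<epsilon> * ?\<phi> (ereal_vec u)"
      if "\<And>i. 0 \<le> u$i" "\<And>i. \<bar>u$i - v$i\<bar> < \<delta>" for u v :: "real^'p"
      using that \<phi>(2,5) unif[of u v] by (intro test_function_diff_le[OF supp]) (auto simp: \<delta>_def)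
    define r where
      "r n = B * (\<Sum>i\<in>UNIV. real n * measure M {\<omega> \<in> space M. X \<omega> $ i \<le> exp (- (\<delta>/2) * b n)})" for n
    have "r \<longlonglongrightarrow> B * (\<Sum>i\<in>(UNIV::'p set). 0)"
      unfolding r_def using \<delta> by (intro tendsto_mult tendsto_const tendsto_sum tail) simp
    moreover have "\<forall>\<^sub>F n in sequentially. \<bar>y n - x n\<bar> \<le> \<epsilon> * c n + r n"
      using b unfolding filterlim_at_top_dense
    proof (rule eventually_mono[OF spec[of _ "2/\<delta>"]])
      fix n assume bn: "2/\<delta> < b n"
      moreover have "0 < 2/\<delta>" using \<delta> by simp
      ultimately have "0 < b n" by linarith
      moreover have "inverse (b n) + \<delta>/2 \<le> \<delta>"
        using less_imp_inverse_less[OF bn] \<open>0 < 2/\<delta>\<close> by simp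
      ultimately have "real n * \<bar>(\<integral>\<omega>. f (\<chi> i. ereal (inverse (b n)) * t_inv (ereal (X \<omega> $ i))) \<partial>M)
           - (\<integral>\<omega>. f (\<chi> i. ereal (inverse (b n)) * ereal (X \<omega> $ i)) \<partial>M)\<bar>
         \<le> real n * (\<epsilon> * (\<integral>\<omega>. ?\<phi> (\<chi> i. ereal (inverse (b n)) * ereal (X \<omega> $ i)) \<partial>M)
           + B * (\<Sum>i\<in>UNIV. measure M {\<omega> \<in> space M. X \<omega> $ i \<le> exp (- (\<delta>/2) * b n)}))"
        using \<delta> \<epsilon> by (intro mult_left_mono expectation_diff_t_inv_le[OF M Xm Xnn
            borel_measurable_continuous_onI[OF fc] f0 fB borel_measurable_continuous_onI[OF \<phi>(1)]
            \<phi>(2,3) close]) auto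
      then show "\<bar>y n - x n\<bar> \<le> \<epsilon> * c n + r n"
        unfolding x_def y_def c_def r_def right_diff_distrib[symmetric] abs_mult
        by (simp add: algebra_simps sum_distrib_left)
    qed
    ultimately show "\<exists>r. r \<longlonglongrightarrow> 0 \<and> (\<forall>\<^sub>F n in sequentially. \<bar>y n - x n\<bar> \<le> \<epsilon> * c n + r n)"
      by auto
  qed
  then show ?thesis unfolding y_def .
qed

lemma AE_pos_of_lower_tail:
  fixes g :: "'a \<Rightarrow> real"
  assumes "prob_space M" and g: "g \<in> borel_measurable M" and c: "\<And>n. 0 < c n"
    and tail: "(\<lambda>n. real n * measure M {\<omega> \<in> space M. g \<omega> \<le> c n}) \<longlonglongrightarrow> 0"
  shows "AE \<omega> in M. 0 < g \<omega>"
proof -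
  interpret prob_space M by fact
  let ?N = "{\<omega> \<in> space M. g \<omega> \<le> 0}"
  have N: "?N \<in> sets M" using g by measurable
  have "measure M ?N \<le> real n * measure M {\<omega> \<in> space M. g \<omega> \<le> c n}" if "1 \<le> n" for n
  proof -
    have "measure M ?N \<le> measure M {\<omega> \<in> space M. g \<omega> \<le> c n}"
      using g c[of n] by (intro finite_measure_mono) (auto intro: order_trans less_imp_le)
    also have "\<dots> \<le> real n * measure M {\<omega> \<in> space M. g \<omega> \<le> c n}"
      using that by (simp add: mult_le_cancel_right1)
    finally show ?thesis .
  qed
  then have "measure M ?N \<le> 0" by (intro LIMSEQ_le_const[OF tail]) blast
  then have "emeasure M ?N = 0" by (simp add: emeasure_eq_measure measure_nonneg antisym)
  then show ?thesis using AE_iff_measurable[OF N] by (simp add: not_less)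
qed

lemma AE_t_inv_finite:
  fixes X :: "'a \<Rightarrow> real^'p"
  assumes "prob_space M" and "X \<in> borel_measurable M"
    and tail: "\<And>i. (\<lambda>n. real n * measure M {\<omega> \<in> space M. X \<omega> $ i \<le> exp (- b n)}) \<longlonglongrightarrow> 0"
  shows "AE \<omega> in M. \<forall>i. \<bar>t_inv (ereal (X \<omega> $ i))\<bar> \<noteq> \<infinity>"
proof -
  have "AE \<omega> in M. 0 < X \<omega> $ i" for i
    using AE_pos_of_lower_tail[OF assms(1) borel_measurable_vec_component[OF assms(2)] _ tail[of i]]
    by simp
  then have "AE \<omega> in M. \<forall>i. 0 < X \<omega> $ i" by (rule eventually_all_finite)
  then show ?thesis by eventually_elim (auto simp: not_le)
qed

section \<open>The limit measure\<close>

lemma ereal_vec_scale_image: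
  fixes c :: real assumes "0 < c"
  shows "(\<lambda>x::ereal^'p. \<chi> i. ereal c * x$i) ` A = (\<lambda>x. \<chi> i. ereal (inverse c) * x$i) -` A"
proof -
  have inv: "ereal (inverse c) * (ereal c * e) = e" "ereal c * (ereal (inverse c) * e) = e" for e
    using assms by (cases e; simp)+
  show ?thesis
  proof
    show "(\<lambda>x::ereal^'p. \<chi> i. ereal c * x$i) ` A \<subseteq> (\<lambda>x. \<chi> i. ereal (inverse c) * x$i) -` A"
      using inv by auto
    show "(\<lambda>x. \<chi> i. ereal (inverse c) * x$i) -` A \<subseteq> (\<lambda>x::ereal^'p. \<chi> i. ereal c * x$i) ` A"
      using inv by (auto intro!: image_eqI[of _ _ "\<chi> i. ereal (inverse c) * _ $ i"] simp: vec_eq_iff)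
  qed
qed

lemma Splus_Int_scale_image:
  fixes c :: real assumes "0 < c"
  shows "Splus \<inter> (\<lambda>x::ereal^'p. \<chi> i. ereal c * x$i) ` A = (\<lambda>x. \<chi> i. ereal c * x$i) ` (Splus \<inter> A)"
proof -
  have "0 \<le> ereal c * e \<longleftrightarrow> 0 \<le> e" for e using assms by (cases e) (auto simp: zero_le_mult_iff)
  then have "(\<chi> i. ereal c * x$i) \<in> Splus \<longleftrightarrow> x \<in> Splus" for x :: "ereal^'p"
    by (simp add: Splus_def)
  then show ?thesis by auto
qed

lemma radon_on_restrict_Splus:
  fixes \<nu> :: "(ereal^'p) measure"
  assumes "radon_on Splus \<nu>"
  shows "radon_on UNIV (density \<nu> (indicator Splus))"
  unfolding radon_on_def
proof (intro conjI allI impI)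
  have sets: "sets \<nu> = sets borel" using assms by (simp add: radon_on_def)
  then show "sets (density \<nu> (indicator Splus)) = sets borel" by simp
  fix K :: "(ereal^'p) set" assume K: "compact K \<and> K \<subseteq> UNIV - {0}"
  then have "compact (Splus \<inter> K)" "Splus \<inter> K \<subseteq> Splus - {0}"
    using closed_Int_compact[OF closed_Splus] by auto
  then have "emeasure \<nu> (Splus \<inter> K) < \<infinity>" using assms by (simp add: radon_on_def)
  moreover have "Splus \<in> sets \<nu>" using borel_closed[OF closed_Splus] by (simp add: sets)
  ultimately show "emeasure (density \<nu> (indicator Splus)) K < \<infinity>"
    by (cases "K \<in> sets \<nu>") (simp_all add: emeasure_restricted emeasure_notin_sets)
qed

lemma homogeneous_on_restrict_Splus:
  fixes \<nu> :: "(ereal^'p) measure"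
  assumes sets: "sets \<nu> = sets borel" and hom: "homogeneous_on Splus \<alpha> \<nu>"
  shows "homogeneous_on UNIV \<alpha> (density \<nu> (indicator Splus))"
  unfolding homogeneous_on_def
proof (intro allI impI ballI)
  fix c :: real and A :: "(ereal^'p) set"
  assume c: "0 < c" and A: "A \<in> sets borel" and "A \<subseteq> UNIV - {0}"
  let ?s = "\<lambda>x::ereal^'p. \<chi> i. ereal c * x$i"
  have S: "Splus \<in> sets \<nu>" using borel_closed[OF closed_Splus] by (simp add: sets)
  have "?s ` A \<in> sets \<nu>"
    using measurable_sets[OF borel_measurable_continuous_onI[OF continuous_on_ereal_vec_scale] A]
    by (simp add: ereal_vec_scale_image[OF c] sets)
  then have "emeasure (density \<nu> (indicator Splus)) (?s ` A) = emeasure \<nu> (?s ` (Splus \<inter> A))"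
    using S by (simp add: emeasure_restricted Splus_Int_scale_image[OF c])
  also have "\<dots> = ennreal (c powr (-\<alpha>)) * emeasure \<nu> (Splus \<inter> A)"
    using hom c A borel_closed[OF closed_Splus] \<open>A \<subseteq> UNIV - {0}\<close>
    unfolding homogeneous_on_def by blast
  also have "\<dots> = ennreal (c powr (-\<alpha>)) * emeasure (density \<nu> (indicator Splus)) A"
    using S A by (simp add: emeasure_restricted sets)
  finally show "emeasure (density \<nu> (indicator Splus)) (?s ` A)
      = ennreal (c powr (-\<alpha>)) * emeasure (density \<nu> (indicator Splus)) A" .
qed

lemma emeasure_restrict_Splus_punctured:
  fixes \<nu> :: "(ereal^'p) measure"
  assumes sets: "sets \<nu> = sets borel"
  shows "emeasure (density \<nu> (indicator Splus)) (UNIV - {0}) = emeasure \<nu> (Splus - {0})"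
  using borel_closed[OF closed_Splus] borel_ereal_vec_nonzero
  by (subst emeasure_restricted) (auto simp: sets intro: arg_cong[where f="emeasure \<nu>"])

lemma nn_integral_restrict_Splus:
  fixes f :: "ereal^'p \<Rightarrow> ennreal" and \<nu> :: "(ereal^'p) measure"
  assumes sets: "sets \<nu> = sets borel" and f: "f \<in> borel_measurable borel"
  shows "(\<integral>\<^sup>+x\<in>UNIV - {0}. f x \<partial>density \<nu> (indicator Splus)) = (\<integral>\<^sup>+x\<in>Splus - {0}. f x \<partial>\<nu>)"
proof -
  have "(\<integral>\<^sup>+x\<in>UNIV - {0}. f x \<partial>density \<nu> (indicator Splus))
      = (\<integral>\<^sup>+x. indicator Splus x * (f x * indicator (UNIV - {0}) x) \<partial>\<nu>)"
    by (intro nn_integral_density borel_measurable_times_ennreal borel_measurable_indicator)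
      (simp_all add: sets f borel_closed[OF closed_Splus] borel_ereal_vec_nonzero
        measurable_cong_sets[OF sets refl])
  also have "\<dots> = (\<integral>\<^sup>+x\<in>Splus - {0}. f x \<partial>\<nu>)"
    by (rule nn_integral_cong) (auto simp: indicator_def)
  finally show ?thesis .
qed

lemma vague_conv_t_inv:
  fixes X :: "'a \<Rightarrow> real^'p" and \<nu> :: "(ereal^'p) measure"
  assumes M: "prob_space M" and Xm: "X \<in> borel_measurable M"
    and Xnn: "\<And>\<omega> i. \<omega> \<in> space M \<Longrightarrow> 0 \<le> X \<omega> $ i"
    and vc: "vague_conv Splus (scaled_law M (\<lambda>\<omega>. \<chi> i. ereal (X \<omega> $ i)) b) \<nu>"
    and rad: "radon_on Splus \<nu>" and b: "filterlim b at_top sequentially"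
    and tail: "\<And>k i. 0 < k \<Longrightarrow>
       (\<lambda>n. real n * measure M {\<omega> \<in> space M. X \<omega> $ i \<le> exp (- k * b n)}) \<longlonglongrightarrow> 0"
  shows "vague_conv UNIV (scaled_law M (\<lambda>\<omega>. \<chi> i. t_inv (ereal (X \<omega> $ i))) b)
           (density \<nu> (indicator Splus))"
  unfolding vague_conv_def
proof (intro allI impI)
  fix f :: "ereal^'p \<Rightarrow> real"
  assume "continuous_on UNIV f \<and> (\<forall>x\<in>UNIV. 0 \<le> f x) \<and>
       (\<exists>K. compact K \<and> K \<subseteq> UNIV - {0} \<and> (\<forall>x\<in>UNIV - K. f x = 0))"
  then obtain K where fc: "continuous_on UNIV f" and f0: "\<And>x. 0 \<le> f x"
    and K: "compact K" "0 \<notin> K" and fK: "\<And>x. x \<notin> K \<Longrightarrow> f x = 0" by blast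
  obtain \<eta> where \<eta>: "0 < \<eta>" "\<And>x. x \<in> K \<Longrightarrow> \<exists>i. ereal \<eta> < \<bar>x$i\<bar>"
    using compact_avoiding_zero_coord_bound[OF K] by blast
  have supp: "\<exists>i. ereal \<eta> \<le> \<bar>x$i\<bar>" if "f x \<noteq> 0" for x
    using fK \<eta>(2) that by (meson less_imp_le)
  obtain B where fB: "\<And>x. f x \<le> B" using continuous_ereal_vec_bounded[OF fc] by blast
  have \<eta>4: "0 < \<eta>/4" using \<eta>(1) by simp
  note \<phi> = coord_bump_props[OF \<eta>4]
  have Xem: "(\<lambda>\<omega>. \<chi> i. ereal (X \<omega> $ i)) \<in> borel_measurable M"
    by (intro borel_measurable_vec_map[OF _ Xm] continuous_on_ereal continuous_on_id)
  have XS: "(\<chi> i. ereal (X \<omega> $ i)) \<in> Splus" if "\<omega> \<in> space M" for \<omega>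
    using Xnn[OF that] by (simp add: Splus_def)
  obtain l where l: "(\<lambda>n. real n * (\<integral>\<omega>. f (\<chi> i. ereal (inverse (b n)) * ereal (X \<omega> $ i)) \<partial>M))
      \<longlonglongrightarrow> l"
    and l_integral: "(\<integral>\<^sup>+x\<in>Splus - {0}. ennreal (f x) \<partial>\<nu>) = ennreal l" and "0 \<le> l"
    using vague_conv_expectation_tendsto[OF M Xem XS vc rad b fc f0 fB
        closed_coord_abs_ge[OF \<eta>(1)]] \<eta>(1) supp by force
  obtain m where "(\<lambda>n. real n * (\<integral>\<omega>. coord_bump (\<eta>/4) (\<chi> i. ereal (inverse (b n)) * ereal (X \<omega> $ i)) \<partial>M))
      \<longlonglongrightarrow> m"
    using vague_conv_expectation_tendsto[OF M Xem XS vc rad b \<phi>(1-3) closed_coord_ge] \<eta>4 \<phi>(4)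
    by force
  from expectation_t_inv_tendsto[OF M Xm Xnn b tail fc f0 fB \<eta>(1) supp l this]
  have "(\<lambda>n. ennreal (real n * (\<integral>\<omega>. f (\<chi> i. ereal (inverse (b n)) * t_inv (ereal (X \<omega> $ i))) \<partial>M)))
      \<longlonglongrightarrow> ennreal l"
    by (rule tendsto_ennrealI)
  moreover have "f 0 = 0" using supp \<eta>(1) by fastforce
  then have "(\<integral>\<^sup>+x\<in>UNIV - {0}. ennreal (f x) \<partial>scaled_law M (\<lambda>\<omega>. \<chi> i. t_inv (ereal (X \<omega> $ i))) b n)
      = ennreal (real n * (\<integral>\<omega>. f (\<chi> i. ereal (inverse (b n)) * t_inv (ereal (X \<omega> $ i))) \<partial>M))" for n
    unfolding scaled_law_def vec_lambda_beta
    by (intro nn_integral_scaled_distr[OF M _ borel_measurable_continuous_onI[OF fc] f0 fB]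
        borel_measurable_vec_map[OF _ Xm] continuous_on_cmult_ereal
        continuous_on_compose2[OF continuous_on_t_inv] continuous_on_ereal continuous_on_id) auto
  moreover have "(\<integral>\<^sup>+x\<in>UNIV - {0}. ennreal (f x) \<partial>density \<nu> (indicator Splus)) = ennreal l"
    using rad l_integral borel_measurable_continuous_onI[OF fc]
    by (simp add: radon_on_def nn_integral_restrict_Splus)
  ultimately show "(\<lambda>n. \<integral>\<^sup>+x\<in>UNIV - {0}. ennreal (f x)
        \<partial>scaled_law M (\<lambda>\<omega>. \<chi> i. t_inv (ereal (X \<omega> $ i))) b n)
      \<longlonglongrightarrow> (\<integral>\<^sup>+x\<in>UNIV - {0}. ennreal (f x) \<partial>density \<nu> (indicator Splus))"
    by simp
qed

theorem lemmaA1: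
  fixes M :: "'a measure" and X :: "'a \<Rightarrow> real ^ 'p" and \<alpha> :: real
    and b :: "nat \<Rightarrow> real" and \<nu>X :: "(ereal ^ 'p) measure"
  assumes "prob_space M"
    and "X \<in> borel_measurable M"
    and "RV_plus M X \<alpha> b \<nu>X"
    and "\<forall>k::real. k > 0 \<longrightarrow> (\<forall>i.
           (\<lambda>n. real n * measure M {\<omega> \<in> space M. X \<omega> $ i \<le> exp (- k * b n)}) \<longlonglongrightarrow> 0)"
  shows "RV M (\<lambda>\<omega>. \<chi> i. t_inv (ereal (X \<omega> $ i))) \<alpha> b (density \<nu>X (indicator Splus))"
proof -
  have Xnn: "\<And>\<omega> i. \<omega> \<in> space M \<Longrightarrow> 0 \<le> X \<omega> $ i"
    and "0 < \<alpha>" and b: "filterlim b at_top sequentially" and rad: "radon_on Splus \<nu>X"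
    and nonzero: "emeasure \<nu>X (Splus - {0}) \<noteq> 0" and hom: "homogeneous_on Splus \<alpha> \<nu>X"
    and vc: "vague_conv Splus (scaled_law M (\<lambda>\<omega>. \<chi> i. ereal (X \<omega> $ i)) b) \<nu>X"
    using assms(3) unfolding RV_plus_def regvar_on_def by auto
  have tail: "\<And>k i. 0 < k \<Longrightarrow>
      (\<lambda>n. real n * measure M {\<omega> \<in> space M. X \<omega> $ i \<le> exp (- k * b n)}) \<longlonglongrightarrow> 0"
    using assms(4) by blast
  have sets: "sets \<nu>X = sets borel" using rad by (simp add: radon_on_def)
  have "(\<lambda>\<omega>. \<chi> i. t_inv (ereal (X \<omega> $ i))) \<in> borel_measurable M"
    by (intro borel_measurable_vec_map[OF _ assms(2)] continuous_on_compose2[OF continuous_on_t_inv]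
        continuous_on_ereal continuous_on_id) auto
  moreover have "vague_conv UNIV (scaled_law M (\<lambda>\<omega>. \<chi> i. t_inv (ereal (X \<omega> $ i))) b)
      (density \<nu>X (indicator Splus))"
    using assms(1,2) Xnn vc rad b tail by (rule vague_conv_t_inv)
  ultimately show ?thesis
    unfolding RV_def regvar_on_def
    using AE_t_inv_finite[OF assms(1,2) tail[of 1, simplified]] \<open>0 < \<alpha>\<close> b nonzero
      radon_on_restrict_Splus[OF rad] homogeneous_on_restrict_Splus[OF sets hom]
      emeasure_restrict_Splus_punctured[OF sets]
    by simp
qed

end
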